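(* Let $(\mathcal A,d)$ be a DGA and let $a,b_1,\dots,b_n\in\mathcal A$ be closed with $|a|$ even and each $a\wedge b_i$ exact. The indeterminacy $\{x-x' : x,x'\in\langle a;b_1,\dots,b_n\rangle\}$ of the $a$-Massey product $\langle a;b_1,\dots,b_n\rangle$ is a subset of $$\sum_{j=1}^n\langle a;b_1,\dots,\widehat{b_j},\dots,b_n\rangle\wedge H(\mathcal A),$$ where $\widehat{b_j}$ means $b_j$ is omitted. In particular, the indeterminacy of $\langle a;b_1,b_2,b_3\rangle$ is a subset of $$\langle b_1,a,b_2\rangle\wedge H(\mathcal A)+\langle b_2,a,b_3\rangle\wedge H(\mathcal A)+\langle b_3,a,b_1\rangle\wedge H(\mathcal A),$$ where $\langle\cdot,\cdot,\cdot\rangle$ denotes the ordinary triple Massey product.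
   Context: A DGA is a graded-commutative differential graded algebra over $\mathbb R$; $|x|$ denotes degree and $\overline{x}=(-1)^{|x|}x$. Given closed $a,b_1,\dots,b_n$ with $|a|$ even and each $a\wedge b_i$ exact, the $a$-Massey product is $\langle a;b_1,\dots,b_n\rangle=\{[\sum_{i=1}^n\overline{\xi_1}\wedge\cdots\wedge\overline{\xi_{i-1}}\wedge b_i\wedge\xi_{i+1}\wedge\cdots\wedge\xi_n] : d\xi_i=a\wedge b_i\}\subset H(\mathcal A)$. For closed $x_1,x_2,x_3$ with $x_1\wedge x_2$, $x_2\wedge x_3$ exact, the triple Massey product is $\langle x_1,x_2,x_3\rangle=\{[x_1\wedge x_{2,3}+(-1)^{|x_1|+1}x_{1,2}\wedge x_3] : dx_{1,2}=x_1\wedge x_2,\ dx_{2,3}=x_2\wedge x_3\}$. For subsets $S,T\subset H(\mathcal A)$, $S\wedge T$ and $S+T$ denote the sets of products and sums of elements. *)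

theory Defs
  imports Main Complex_Main
begin

definition psign :: "int \<Rightarrow> 'a::ring_1 \<Rightarrow> 'a" where
  "psign k x = (if even k then x else - x)"

text \<open>A (nonnegatively, cohomologically) graded-commutative DGA over the reals:
  the algebra is the type 'a, G k is the degree-k subspace, d the differential.\<close>
definition is_DGA :: "(int \<Rightarrow> 'a::real_algebra_1 set) \<Rightarrow> ('a \<Rightarrow> 'a) \<Rightarrow> bool" where
  "is_DGA G d \<longleftrightarrow>
     (\<forall>k. subspace (G k)) \<and>
     (\<forall>k<0. G k = {0}) \<and>
     (\<forall>x. \<exists>!c::int \<Rightarrow> 'a. finite {k. c k \<noteq> 0} \<and> (\<forall>k. c k \<in> G k)
            \<and> x = (\<Sum>k\<in>{k. c k \<noteq> 0}. c k)) \<and>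
     1 \<in> G 0 \<and>
     (\<forall>k l x y. x \<in> G k \<longrightarrow> y \<in> G l \<longrightarrow> x * y \<in> G (k + l)) \<and>
     (\<forall>k l x y. x \<in> G k \<longrightarrow> y \<in> G l \<longrightarrow> x * y = psign (k * l) (y * x)) \<and>
     linear d \<and>
     (\<forall>k x. x \<in> G k \<longrightarrow> d x \<in> G (k + 1)) \<and>
     (\<forall>x. d (d x) = 0) \<and>
     (\<forall>k x y. x \<in> G k \<longrightarrow> d (x * y) = d x * y + psign k (x * d y))"

text \<open>Cohomology classes are represented as cosets x + im d.\<close>
definition cls :: "('a::real_algebra_1 \<Rightarrow> 'a) \<Rightarrow> 'a \<Rightarrow> 'a set" where
  "cls d x = {x + d y | y. True}"

definition Hset :: "('a::real_algebra_1 \<Rightarrow> 'a) \<Rightarrow> 'a set set" where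
  "Hset d = {cls d z | z. d z = 0}"

definition hadd :: "'a::real_algebra_1 set \<Rightarrow> 'a set \<Rightarrow> 'a set" where
  "hadd X Y = {x + y | x y. x \<in> X \<and> y \<in> Y}"

definition hdiff :: "'a::real_algebra_1 set \<Rightarrow> 'a set \<Rightarrow> 'a set" where
  "hdiff X Y = {x - y | x y. x \<in> X \<and> y \<in> Y}"

definition hmul :: "('a::real_algebra_1 \<Rightarrow> 'a) \<Rightarrow> 'a set \<Rightarrow> 'a set \<Rightarrow> 'a set" where
  "hmul d X Y = (\<Union>x\<in>X. \<Union>y\<in>Y. cls d (x * y))"

definition smul :: "('a::real_algebra_1 \<Rightarrow> 'a) \<Rightarrow> 'a set set \<Rightarrow> 'a set set \<Rightarrow> 'a set set" where
  "smul d S T = {hmul d X Y | X Y. X \<in> S \<and> Y \<in> T}"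

definition sadd :: "'a::real_algebra_1 set set \<Rightarrow> 'a set set \<Rightarrow> 'a set set" where
  "sadd S T = {hadd X Y | X Y. X \<in> S \<and> Y \<in> T}"

fun ssum :: "('a::real_algebra_1 \<Rightarrow> 'a) \<Rightarrow> (nat \<Rightarrow> 'a set set) \<Rightarrow> nat \<Rightarrow> 'a set set" where
  "ssum d F 0 = {cls d 0}"
| "ssum d F (Suc j) = sadd (ssum d F j) (F (Suc j))"

definition indet :: "'a::real_algebra_1 set set \<Rightarrow> 'a set set" where
  "indet S = {hdiff X Y | X Y. X \<in> S \<and> Y \<in> S}"

text \<open>The a-Massey product <a; b_1, ..., b_n>, with |a| = p and |b_i| = q i;
  defining systems xi_i are homogeneous of degree p + q i - 1 with d xi_i = a b_i.\<close>
definition amassey :: "(int \<Rightarrow> 'a::real_algebra_1 set) \<Rightarrow> ('a \<Rightarrow> 'a) \<Rightarrow> int \<Rightarrow> (nat \<Rightarrow> int)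
    \<Rightarrow> 'a \<Rightarrow> (nat \<Rightarrow> 'a) \<Rightarrow> nat \<Rightarrow> 'a set set" where
  "amassey G d p q a b n =
     {cls d (\<Sum>i=1..n. prod_list (map (\<lambda>k. psign (p + q k - 1) (\<xi> k)) [1..<i])
                       * b i * prod_list (map \<xi> [Suc i..<Suc n]))
      | \<xi>. \<forall>i\<in>{1..n}. \<xi> i \<in> G (p + q i - 1) \<and> d (\<xi> i) = a * b i}"

text \<open>Ordinary triple Massey product <x1, x2, x3>, |x_i| = k_i.\<close>
definition tmassey :: "(int \<Rightarrow> 'a::real_algebra_1 set) \<Rightarrow> ('a \<Rightarrow> 'a) \<Rightarrow> int \<Rightarrow> int \<Rightarrow> int
    \<Rightarrow> 'a \<Rightarrow> 'a \<Rightarrow> 'a \<Rightarrow> 'a set set" where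
  "tmassey G d k1 k2 k3 x1 x2 x3 =
     {cls d (x1 * x23 + psign (k1 + 1) (x12 * x3)) | x12 x23.
        x12 \<in> G (k1 + k2 - 1) \<and> d x12 = x1 * x2 \<and>
        x23 \<in> G (k2 + k3 - 1) \<and> d x23 = x2 * x3}"

definition omit :: "nat \<Rightarrow> (nat \<Rightarrow> 'b) \<Rightarrow> nat \<Rightarrow> 'b" where
  "omit j f i = (if i < j then f i else f (Suc i))"

end

theory Submission
  imports Defs
begin

text \<open>Replace a defining system \<open>\<xi>\<close> of \<open>\<langle>a; b\<^sub>1, \<dots>, b\<^sub>n\<rangle>\<close> by another one \<open>\<xi>'\<close> one
  entry at a time. This telescopes the difference of the two representatives into
  \<open>\<Sum>\<^sub>j \<plusminus>(\<xi>'\<^sub>j - \<xi>\<^sub>j) M\<^sub>j\<close>, where \<open>M\<^sub>j\<close> is the representative of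
  \<open>\<langle>a; b\<^sub>1, \<dots>, b\<^sub>j\<^sub>-\<^sub>1, b\<^sub>j\<^sub>+\<^sub>1, \<dots>, b\<^sub>n\<rangle>\<close> built from the hybrid system
  \<open>\<xi>'\<^sub>1, \<dots>, \<xi>'\<^sub>j\<^sub>-\<^sub>1, \<xi>\<^sub>j\<^sub>+\<^sub>1, \<dots>, \<xi>\<^sub>n\<close>. Both \<open>\<xi>'\<^sub>j\<close> and \<open>\<xi>\<^sub>j\<close> have differential \<open>a b\<^sub>j\<close>,
  so \<open>\<xi>'\<^sub>j - \<xi>\<^sub>j\<close> is closed, and graded commutativity turns each summand into a product
  of classes \<open>[M\<^sub>j] \<and> [\<plusminus>(\<xi>'\<^sub>j - \<xi>\<^sub>j)]\<close>. For \<open>n = 3\<close> the reduced products have two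
  entries, and since \<open>|a|\<close> is even, \<open>a\<close> commutes with everything, so that a representative
  \<open>b\<^sub>1 \<xi>\<^sub>2 + \<xi>\<^sub>1\<^sup>- b\<^sub>2\<close> of \<open>\<langle>a; b\<^sub>1, b\<^sub>2\<rangle>\<close> is one of the triple product \<open>\<langle>b\<^sub>1, a, b\<^sub>2\<rangle>\<close>, and up to
  sign also one of \<open>\<langle>b\<^sub>2, a, b\<^sub>1\<rangle>\<close>.\<close>

lemma psign_even [simp]: "even k \<Longrightarrow> psign k x = x"
  by (simp add: psign_def)

lemma psign_zero [simp]: "psign k 0 = 0"
  by (simp add: psign_def)

lemma psign_cong: "even k = even l \<Longrightarrow> psign k x = psign l x"
  by (simp add: psign_def)

lemma psign_odd_diff: "odd (k - l) \<Longrightarrow> psign k x = - psign l x"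
  by (auto simp: psign_def)

lemma psign_add: "psign (k + l) x = psign k (psign l x)"
  by (auto simp: psign_def)

lemma psign_psign_commute: "psign k (psign l x) = psign l (psign k x)"
  by (simp add: psign_def)

lemma psign_psign_self [simp]: "psign k (psign k x) = x"
  by (simp add: psign_def)

lemma psign_distrib_add: "psign k (x + y) = psign k x + psign k y"
  by (simp add: psign_def)

lemma psign_distrib_diff: "psign k (x - y) = psign k x - psign k y"
  by (simp add: psign_def)

lemma psign_mult_left: "psign k x * y = psign k (x * y)"
  by (simp add: psign_def)

lemma psign_mult_right: "x * psign k y = psign k (x * y)"
  by (simp add: psign_def)

lemma sum_atLeastAtMost_1_3: "(\<Sum>j=1..3. f j) = f 1 + f 2 + f 3"
  for f :: "nat \<Rightarrow> 'a::comm_monoid_add"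
proof -
  have "{1..3::nat} = {1, 2, 3}" by auto
  then show ?thesis by (simp add: add.assoc)
qed

subsection \<open>Representatives of a-Massey products\<close>

definition massey_prefix :: "int \<Rightarrow> (nat \<Rightarrow> int) \<Rightarrow> (nat \<Rightarrow> 'a::real_algebra_1) \<Rightarrow> nat \<Rightarrow> 'a" where
  "massey_prefix p q \<xi> i = prod_list (map (\<lambda>k. psign (p + q k - 1) (\<xi> k)) [1..<i])"

definition massey_rep ::
    "int \<Rightarrow> (nat \<Rightarrow> int) \<Rightarrow> (nat \<Rightarrow> 'a::real_algebra_1) \<Rightarrow> nat \<Rightarrow> (nat \<Rightarrow> 'a) \<Rightarrow> 'a" where
  "massey_rep p q b n \<xi> =
     (\<Sum>i=1..n. massey_prefix p q \<xi> i * b i * prod_list (map \<xi> [Suc i..<Suc n]))"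

definition massey_deg :: "int \<Rightarrow> (nat \<Rightarrow> int) \<Rightarrow> nat \<Rightarrow> int" where
  "massey_deg p q n = (\<Sum>k=1..n. p + q k - 1)"

definition defining_system ::
    "(int \<Rightarrow> 'a::real_algebra_1 set) \<Rightarrow> ('a \<Rightarrow> 'a) \<Rightarrow> int \<Rightarrow> (nat \<Rightarrow> int) \<Rightarrow> 'a
      \<Rightarrow> (nat \<Rightarrow> 'a) \<Rightarrow> nat \<Rightarrow> (nat \<Rightarrow> 'a) \<Rightarrow> bool" where
  "defining_system G d p q a b n \<xi> \<longleftrightarrow> (\<forall>i\<in>{1..n}. \<xi> i \<in> G (p + q i - 1) \<and> d (\<xi> i) = a * b i)"

definition homogeneous_cocycles ::
    "(int \<Rightarrow> 'a::real_algebra_1 set) \<Rightarrow> ('a \<Rightarrow> 'a) \<Rightarrow> (nat \<Rightarrow> int) \<Rightarrow> (nat \<Rightarrow> 'a) \<Rightarrow> nat \<Rightarrow> bool" where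
  "homogeneous_cocycles G d q b n \<longleftrightarrow> (\<forall>i\<in>{1..n}. b i \<in> G (q i) \<and> d (b i) = 0)"

definition hybrid_system :: "(nat \<Rightarrow> 'a) \<Rightarrow> (nat \<Rightarrow> 'a) \<Rightarrow> nat \<Rightarrow> nat \<Rightarrow> 'a" where
  "hybrid_system \<xi> \<xi>' j k = (if k < j then \<xi>' k else \<xi> (Suc k))"

text \<open>The sign acquired by \<open>\<xi>'\<^sub>j - \<xi>\<^sub>j\<close> when it is moved to the front, past
  \<open>\<xi>'\<^sub>1\<^sup>- \<dots> \<xi>'\<^sub>j\<^sub>-\<^sub>1\<^sup>-\<close>, in the telescoped difference.\<close>

definition telescope_sign :: "int \<Rightarrow> (nat \<Rightarrow> int) \<Rightarrow> nat \<Rightarrow> int" where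
  "telescope_sign p q j = (p + q j - 1) * (massey_deg p q (j - 1) + 1)"

lemma amassey_eq:
  "amassey G d p q a b n = {cls d (massey_rep p q b n \<xi>) | \<xi>. defining_system G d p q a b n \<xi>}"
  by (simp add: amassey_def massey_rep_def massey_prefix_def defining_system_def)

lemma massey_deg_Suc: "massey_deg p q (Suc n) = massey_deg p q n + (p + q (Suc n) - 1)"
  by (simp add: massey_deg_def)

lemma massey_prefix_1 [simp]: "massey_prefix p q \<xi> (Suc 0) = 1"
  by (simp add: massey_prefix_def)

lemma massey_prefix_Suc:
  "massey_prefix p q \<xi> (Suc (Suc n)) = massey_prefix p q \<xi> (Suc n) * psign (p + q (Suc n) - 1) (\<xi> (Suc n))"
  by (simp add: massey_prefix_def)

lemma massey_rep_0 [simp]: "massey_rep p q b 0 \<xi> = 0"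
  by (simp add: massey_rep_def)

lemma massey_rep_Suc:
  "massey_rep p q b (Suc n) \<xi> = massey_rep p q b n \<xi> * \<xi> (Suc n) + massey_prefix p q \<xi> (Suc n) * b (Suc n)"
proof -
  have "(\<Sum>i=1..n. massey_prefix p q \<xi> i * b i * prod_list (map \<xi> [Suc i..<Suc (Suc n)]))
      = (\<Sum>i=1..n. massey_prefix p q \<xi> i * b i * prod_list (map \<xi> [Suc i..<Suc n]) * \<xi> (Suc n))"
    by (rule sum.cong) (auto simp: mult.assoc)
  then show ?thesis
    by (simp add: massey_rep_def sum_distrib_right)
qed

lemma massey_rep_2: "massey_rep p q b 2 \<xi> = b 1 * \<xi> 2 + psign (p + q 1 - 1) (\<xi> 1) * b 2"
  by (simp add: numeral_2_eq_2 massey_rep_Suc massey_prefix_Suc)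

lemma massey_prefix_cong:
  "(\<And>k. 1 \<le> k \<Longrightarrow> k < i \<Longrightarrow> q k = q' k \<and> \<xi> k = \<xi>' k) \<Longrightarrow> massey_prefix p q \<xi> i = massey_prefix p q' \<xi>' i"
  unfolding massey_prefix_def by (intro arg_cong[where f=prod_list] map_cong) auto

lemma massey_rep_cong:
  assumes "\<And>k. 1 \<le> k \<Longrightarrow> k \<le> n \<Longrightarrow> q k = q' k \<and> b k = b' k \<and> \<xi> k = \<xi>' k"
  shows "massey_rep p q b n \<xi> = massey_rep p q' b' n \<xi>'"
  unfolding massey_rep_def
proof (rule sum.cong[OF refl])
  fix i assume i: "i \<in> {1..n}"
  have "map \<xi> [Suc i..<Suc n] = map \<xi>' [Suc i..<Suc n]"
    using assms by (intro map_cong) auto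
  moreover have "massey_prefix p q \<xi> i = massey_prefix p q' \<xi>' i"
    using assms i by (intro massey_prefix_cong) auto
  moreover have "b i = b' i"
    using assms i by auto
  ultimately show "massey_prefix p q \<xi> i * b i * prod_list (map \<xi> [Suc i..<Suc n])
      = massey_prefix p q' \<xi>' i * b' i * prod_list (map \<xi>' [Suc i..<Suc n])"
    by (simp only:)
qed

lemma homogeneous_cocycles_omit:
  "homogeneous_cocycles G d q b n \<Longrightarrow> homogeneous_cocycles G d (omit j q) (omit j b) (n - 1)"
  by (auto simp: homogeneous_cocycles_def omit_def)

lemma defining_system_hybrid:
  assumes "defining_system G d p q a b n \<xi>" and "defining_system G d p q a b n \<xi>'"
  shows "defining_system G d p (omit j q) a (omit j b) (n - 1) (hybrid_system \<xi> \<xi>' j)"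
  using assms by (auto simp: defining_system_def hybrid_system_def omit_def)

lemma massey_prefix_hybrid_Suc:
  assumes "j \<in> {1..n}"
  shows "massey_prefix p (omit j q) (hybrid_system \<xi> \<xi>' j) (Suc n)
    = massey_prefix p (omit j q) (hybrid_system \<xi> \<xi>' j) n * psign (p + q (Suc n) - 1) (\<xi> (Suc n))"
proof -
  obtain m where n: "n = Suc m" using assms by (cases n) auto
  show ?thesis
    using assms unfolding n massey_prefix_Suc by (simp add: omit_def hybrid_system_def)
qed

lemma massey_rep_hybrid_Suc:
  assumes "j \<in> {1..n}"
  shows "massey_rep p (omit j q) (omit j b) n (hybrid_system \<xi> \<xi>' j)
    = massey_rep p (omit j q) (omit j b) (n - 1) (hybrid_system \<xi> \<xi>' j) * \<xi> (Suc n)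
      + massey_prefix p (omit j q) (hybrid_system \<xi> \<xi>' j) n * b (Suc n)"
proof -
  obtain m where n: "n = Suc m" using assms by (cases n) auto
  show ?thesis
    using assms unfolding n massey_rep_Suc by (simp add: omit_def hybrid_system_def)
qed

lemma massey_prefix_hybrid_last:
  "massey_prefix p (omit (Suc n) q) (hybrid_system \<xi> \<xi>' (Suc n)) (Suc n) = massey_prefix p q \<xi>' (Suc n)"
  by (rule massey_prefix_cong) (simp add: omit_def hybrid_system_def)

lemma massey_rep_hybrid_last:
  "massey_rep p (omit (Suc n) q) (omit (Suc n) b) n (hybrid_system \<xi> \<xi>' (Suc n)) = massey_rep p q b n \<xi>'"
  by (rule massey_rep_cong) (simp add: omit_def hybrid_system_def)

subsection \<open>Cohomology classes\<close>

locale dga =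
  fixes G :: "int \<Rightarrow> 'a::real_algebra_1 set" and d :: "'a \<Rightarrow> 'a"
  assumes DGA: "is_DGA G d"
begin

lemma G_subspace: "subspace (G k)"
  using DGA unfolding is_DGA_def by (elim conjE) (rule spec)

lemma G_zero: "0 \<in> G k"
  using G_subspace subspace_0 by blast

lemma G_add: "x \<in> G k \<Longrightarrow> y \<in> G k \<Longrightarrow> x + y \<in> G k"
  using G_subspace subspace_add by blast

lemma G_diff: "x \<in> G k \<Longrightarrow> y \<in> G k \<Longrightarrow> x - y \<in> G k"
  using G_subspace subspace_diff by blast

lemma G_psign: "x \<in> G k \<Longrightarrow> psign l x \<in> G k"
  unfolding psign_def using G_subspace subspace_neg by auto

lemma G_one: "1 \<in> G 0"
  using DGA unfolding is_DGA_def by (elim conjE)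

lemma G_mult: "x \<in> G k \<Longrightarrow> y \<in> G l \<Longrightarrow> x * y \<in> G (k + l)"
  using DGA unfolding is_DGA_def by (elim conjE) metis

lemma G_mult_eq: "x \<in> G k \<Longrightarrow> y \<in> G l \<Longrightarrow> m = k + l \<Longrightarrow> x * y \<in> G m"
  using G_mult by blast

lemma graded_commute: "x \<in> G k \<Longrightarrow> y \<in> G l \<Longrightarrow> x * y = psign (k * l) (y * x)"
  using DGA unfolding is_DGA_def by (elim conjE) metis

lemma homogeneous_decomposition:
  "\<exists>c::int \<Rightarrow> 'a. finite {k. c k \<noteq> 0} \<and> (\<forall>k. c k \<in> G k) \<and> x = (\<Sum>k\<in>{k. c k \<noteq> 0}. c k)"
  using DGA unfolding is_DGA_def by (elim conjE) (metis ex1_implies_ex)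

lemma d_linear: "linear d"
  using DGA unfolding is_DGA_def by (elim conjE)

lemma d_add: "d (x + y) = d x + d y"
  using d_linear by (simp add: linear_add)

lemma d_diff: "d (x - y) = d x - d y"
  using d_linear by (simp add: linear_diff)

lemma d_zero [simp]: "d 0 = 0"
  using d_linear by (simp add: linear_0)

lemma d_sum: "d (sum f A) = (\<Sum>i\<in>A. d (f i))"
  using d_linear by (simp add: linear_sum)

lemma d_psign: "d (psign k x) = psign k (d x)"
  using d_linear by (simp add: psign_def linear_neg)

lemma d_d [simp]: "d (d x) = 0"
  using DGA unfolding is_DGA_def by (elim conjE) metis

lemma d_mult: "x \<in> G k \<Longrightarrow> d (x * y) = d x * y + psign k (x * d y)"
  using DGA unfolding is_DGA_def by (elim conjE) metis

lemma d_one [simp]: "d 1 = 0"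
  using d_mult[OF G_one, of 1] by simp

lemma cls_eqI: "x - y \<in> range d \<Longrightarrow> cls d x = cls d y"
proof -
  assume "x - y \<in> range d"
  then obtain z where z: "x = y + d z" by (metis diff_add_cancel add.commute rangeE)
  have "x + d t = y + d (z + t)" and "y + d t = x + d (t - z)" for t
    using z by (simp_all add: d_add d_diff algebra_simps)
  then show ?thesis unfolding cls_def by blast
qed

lemma cls_self: "x \<in> cls d x"
  unfolding cls_def by (auto intro: exI[of _ 0])

lemma hadd_cls: "hadd (cls d x) (cls d y) = cls d (x + y)"
proof -
  have "x + d s + (y + d t) = x + y + d (s + t)" for s t
    by (simp add: d_add algebra_simps)
  moreover have "x + y + d t = (x + d t) + (y + d 0)" for t
    by simp
  ultimately show ?thesis unfolding hadd_def cls_def by blast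
qed

lemma hdiff_cls: "hdiff (cls d x) (cls d y) = cls d (x - y)"
proof -
  have "x + d s - (y + d t) = x - y + d (s - t)" for s t
    by (simp add: d_diff algebra_simps)
  moreover have "x - y + d t = (x + d t) - (y + d 0)" for t
    by simp
  ultimately show ?thesis unfolding hdiff_def cls_def by blast
qed

text \<open>Leibniz' rule needs a homogeneous left factor, so \<open>u\<close> is split into homogeneous parts.\<close>

lemma exact_mult_cocycle: "d y = 0 \<Longrightarrow> d u * y \<in> range d"
proof -
  assume dy: "d y = 0"
  obtain c where c: "finite {k. c k \<noteq> 0}" "\<forall>k. c k \<in> G k" "u = (\<Sum>k\<in>{k. c k \<noteq> 0}. c k)"
    using homogeneous_decomposition[of u] by auto
  have "d (c k * y) = d (c k) * y" for k
    using d_mult[of "c k" k y] c(2) dy by simp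
  then have "d u * y = d (\<Sum>k\<in>{k. c k \<noteq> 0}. c k * y)"
    unfolding c(3) d_sum sum_distrib_right by simp
  then show ?thesis by (rule range_eqI)
qed

lemma hmul_cls:
  assumes "d m = 0" and "m \<in> G k" and "d w = 0"
  shows "hmul d (cls d m) (cls d w) = cls d (m * w)"
proof -
  have "cls d (x * y) = cls d (m * w)" if x: "x \<in> cls d m" and y: "y \<in> cls d w" for x y
  proof -
    obtain u v where uv: "x = m + d u" "y = w + d v"
      using x y unfolding cls_def by blast
    have "d y = 0" using uv assms by (simp add: d_add)
    then obtain z where z: "d u * y = d z" using exact_mult_cocycle by blast
    have "m * d v = d (psign k (m * v))"
      using d_mult[OF assms(2), of v] assms(1) by (simp add: d_psign)
    then have "x * y - m * w = d (z + psign k (m * v))"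
      using uv z by (simp add: d_add algebra_simps)
    then show ?thesis by (intro cls_eqI) auto
  qed
  then show ?thesis
    unfolding hmul_def using cls_self[of m] cls_self[of w] by blast
qed

lemma cls_mult_in_smul:
  assumes "d m = 0" and "m \<in> G k" and "d w = 0" and "cls d m \<in> S"
  shows "cls d (m * w) \<in> smul d S (Hset d)"
proof -
  have "cls d w \<in> Hset d" unfolding Hset_def using assms(3) by blast
  then show ?thesis
    unfolding smul_def hmul_cls[OF assms(1-3), symmetric] using assms(4) by blast
qed

lemma cls_sum_in_ssum:
  "(\<And>j. j \<in> {1..n} \<Longrightarrow> cls d (f j) \<in> F j) \<Longrightarrow> cls d (\<Sum>j=1..n. f j) \<in> ssum d F n"
proof (induction n)
  case 0
  then show ?case by simp
next
  case (Suc n)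
  have "cls d (\<Sum>j=1..n. f j) \<in> ssum d F n" and "cls d (f (Suc n)) \<in> F (Suc n)"
    using Suc by auto
  moreover have "cls d (\<Sum>j=1..Suc n. f j) = hadd (cls d (\<Sum>j=1..n. f j)) (cls d (f (Suc n)))"
    by (simp add: hadd_cls)
  ultimately show ?case unfolding ssum.simps sadd_def by blast
qed

end


context dga
begin

lemma massey_prefix_in_G:
  assumes "\<forall>i\<in>{1..n}. \<xi> i \<in> G (p + q i - 1)"
  shows "massey_prefix p q \<xi> (Suc n) \<in> G (massey_deg p q n)"
  using assms
proof (induction n)
  case 0
  then show ?case using G_one by (simp add: massey_deg_def)
next
  case (Suc n)
  have "massey_prefix p q \<xi> (Suc n) \<in> G (massey_deg p q n)" using Suc by auto
  moreover have "psign (p + q (Suc n) - 1) (\<xi> (Suc n)) \<in> G (p + q (Suc n) - 1)"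
    using Suc.prems by (intro G_psign) auto
  ultimately show ?case unfolding massey_prefix_Suc massey_deg_Suc by (rule G_mult)
qed

lemma massey_rep_in_G:
  assumes "\<forall>i\<in>{1..n}. \<xi> i \<in> G (p + q i - 1)" and "\<forall>i\<in>{1..n}. b i \<in> G (q i)"
  shows "massey_rep p q b n \<xi> \<in> G (massey_deg p q n - p + 1)"
  using assms
proof (induction n)
  case 0
  then show ?case by (simp add: G_zero)
next
  case (Suc n)
  have M: "massey_rep p q b n \<xi> \<in> G (massey_deg p q n - p + 1)"
    and P: "massey_prefix p q \<xi> (Suc n) \<in> G (massey_deg p q n)"
    using Suc by (auto intro: massey_prefix_in_G)
  have x: "\<xi> (Suc n) \<in> G (p + q (Suc n) - 1)" and b: "b (Suc n) \<in> G (q (Suc n))"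
    using Suc.prems by auto
  show ?case
    unfolding massey_rep_Suc
    by (intro G_add G_mult_eq[OF M x] G_mult_eq[OF P b]) (simp_all add: massey_deg_Suc)
qed

lemma massey_prefix_diff:
  assumes "\<forall>i\<in>{1..n}. \<xi> i \<in> G (p + q i - 1) \<and> \<xi>' i \<in> G (p + q i - 1)"
  shows "massey_prefix p q \<xi>' (Suc n) - massey_prefix p q \<xi> (Suc n)
     = (\<Sum>j=1..n. psign (telescope_sign p q j)
          ((\<xi>' j - \<xi> j) * massey_prefix p (omit j q) (hybrid_system \<xi> \<xi>' j) n))"
  using assms
proof (induction n)
  case 0
  then show ?case by simp
next
  case (Suc n)
  let ?e = "p + q (Suc n) - 1" and ?E = "massey_deg p q n"
  let ?P = "massey_prefix p q \<xi> (Suc n)" and ?P' = "massey_prefix p q \<xi>' (Suc n)"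
    and ?x = "\<xi> (Suc n)" and ?x' = "\<xi>' (Suc n)"
  let ?f = "\<lambda>m j. psign (telescope_sign p q j)
    ((\<xi>' j - \<xi> j) * massey_prefix p (omit j q) (hybrid_system \<xi> \<xi>' j) m)"
  have IH: "?P' - ?P = (\<Sum>j=1..n. ?f n j)" using Suc by auto
  have P'G: "?P' \<in> G ?E" using Suc.prems by (intro massey_prefix_in_G) auto
  have \<eta>G: "?x' - ?x \<in> G ?e" using Suc.prems by (intro G_diff) auto
  have "massey_prefix p q \<xi>' (Suc (Suc n)) - massey_prefix p q \<xi> (Suc (Suc n))
      = (?P' - ?P) * psign ?e ?x + ?P' * psign ?e (?x' - ?x)"
    unfolding massey_prefix_Suc by (simp add: psign_distrib_diff algebra_simps)
  also have "(?P' - ?P) * psign ?e ?x = (\<Sum>j=1..n. ?f (Suc n) j)"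
    unfolding IH sum_distrib_right
    by (rule sum.cong[OF refl]) (simp add: massey_prefix_hybrid_Suc psign_mult_left mult.assoc)
  also have "?P' * psign ?e (?x' - ?x) = ?f (Suc n) (Suc n)"
  proof -
    have "?P' * psign ?e (?x' - ?x) = psign ?e (psign (?E * ?e) ((?x' - ?x) * ?P'))"
      using graded_commute[OF P'G \<eta>G] by (simp add: psign_mult_right)
    also have "\<dots> = psign (telescope_sign p q (Suc n)) ((?x' - ?x) * ?P')"
      by (simp add: psign_add[symmetric] telescope_sign_def algebra_simps)
    finally show ?thesis by (simp add: massey_prefix_hybrid_last)
  qed
  finally show ?case by simp
qed

end

locale dga_even_element = dga +
  fixes p :: int and a :: "'a::real_algebra_1"
  assumes a_in_G: "a \<in> G p" and even_p: "even p"
begin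

lemma a_commute: "x \<in> G k \<Longrightarrow> a * x = x * a"
  using graded_commute[OF a_in_G, of x k] even_p by simp

lemma d_massey_prefix_rep:
  assumes "defining_system G d p q a b n \<xi>" and "homogeneous_cocycles G d q b n"
  shows "d (massey_prefix p q \<xi> (Suc n)) = psign (massey_deg p q n) (a * massey_rep p q b n \<xi>)
    \<and> d (massey_rep p q b n \<xi>) = 0"
  using assms unfolding defining_system_def homogeneous_cocycles_def
proof (induction n)
  case 0
  then show ?case by (simp add: massey_deg_def)
next
  case (Suc n)
  let ?E = "massey_deg p q n" and ?e = "p + q (Suc n) - 1" and ?P = "massey_prefix p q \<xi> (Suc n)"
    and ?M = "massey_rep p q b n \<xi>" and ?x = "\<xi> (Suc n)" and ?b = "b (Suc n)"
  have IH: "d ?P = psign ?E (a * ?M)" "d ?M = 0" using Suc by auto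
  have PG: "?P \<in> G ?E" using Suc.prems by (intro massey_prefix_in_G) auto
  have MG: "?M \<in> G (?E - p + 1)" using Suc.prems by (intro massey_rep_in_G) auto
  have dx: "d ?x = a * ?b" using Suc.prems by auto
  have db: "d ?b = 0" using Suc.prems by auto
  have aP: "a * ?P = ?P * a" using a_commute[OF PG] .
  have aM: "a * ?M = ?M * a" using a_commute[OF MG] .
  have aPb: "?P * (a * ?b) = a * (?P * ?b)" by (metis aP mult.assoc)
  have "d (massey_prefix p q \<xi> (Suc (Suc n))) = d ?P * psign ?e ?x + psign ?E (?P * d (psign ?e ?x))"
    unfolding massey_prefix_Suc by (rule d_mult[OF PG])
  also have "\<dots> = psign ?E (psign ?e (a * ?M * ?x)) + psign ?E (psign ?e (?P * (a * ?b)))"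
    by (simp add: IH d_psign dx psign_mult_left psign_mult_right psign_psign_commute[of ?E])
  also have "\<dots> = psign (?E + ?e) (a * (?M * ?x + ?P * ?b))"
    by (simp add: psign_add psign_distrib_add distrib_left aPb mult.assoc)
  finally have d_prefix: "d (massey_prefix p q \<xi> (Suc (Suc n)))
      = psign (massey_deg p q (Suc n)) (a * massey_rep p q b (Suc n) \<xi>)"
    by (simp add: massey_rep_Suc massey_deg_Suc)
  have "d (massey_rep p q b (Suc n) \<xi>)
      = (d ?M * ?x + psign (?E - p + 1) (?M * d ?x)) + (d ?P * ?b + psign ?E (?P * d ?b))"
    unfolding massey_rep_Suc d_add by (simp add: d_mult[OF MG] d_mult[OF PG])
  also have "\<dots> = psign (?E - p + 1) (?M * a * ?b) + psign ?E (?M * a * ?b)"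
    by (simp add: IH dx db psign_mult_left aM mult.assoc)
  also have "\<dots> = 0" \<comment> \<open>the two degrees differ by \<open>p - 1\<close>, which is odd\<close>
    using psign_odd_diff[of "?E - p + 1" ?E "?M * a * ?b"] even_p by simp
  finally show ?case using d_prefix by simp
qed

lemma massey_rep_cocycle:
  assumes "defining_system G d p q a b n \<xi>" and "homogeneous_cocycles G d q b n"
  shows "massey_rep p q b n \<xi> \<in> G (massey_deg p q n - p + 1)" and "d (massey_rep p q b n \<xi>) = 0"
proof -
  show "massey_rep p q b n \<xi> \<in> G (massey_deg p q n - p + 1)"
    using assms unfolding defining_system_def homogeneous_cocycles_def
    by (intro massey_rep_in_G) auto
  show "d (massey_rep p q b n \<xi>) = 0"
    using d_massey_prefix_rep[OF assms] by blast
qed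

lemma massey_rep_diff:
  assumes "\<forall>i\<in>{1..n}. \<xi> i \<in> G (p + q i - 1) \<and> \<xi>' i \<in> G (p + q i - 1)"
    and "\<forall>i\<in>{1..n}. b i \<in> G (q i)"
  shows "massey_rep p q b n \<xi>' - massey_rep p q b n \<xi>
     = (\<Sum>j=1..n. psign (telescope_sign p q j)
          ((\<xi>' j - \<xi> j) * massey_rep p (omit j q) (omit j b) (n - 1) (hybrid_system \<xi> \<xi>' j)))"
  using assms
proof (induction n)
  case 0
  then show ?case by simp
next
  case (Suc n)
  let ?e = "p + q (Suc n) - 1" and ?E = "massey_deg p q n"
  let ?P = "massey_prefix p q \<xi> (Suc n)" and ?P' = "massey_prefix p q \<xi>' (Suc n)"
    and ?x = "\<xi> (Suc n)" and ?x' = "\<xi>' (Suc n)"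
  let ?M = "massey_rep p q b n \<xi>" and ?M' = "massey_rep p q b n \<xi>'" and ?b = "b (Suc n)"
  let ?Mj = "\<lambda>m j. massey_rep p (omit j q) (omit j b) m (hybrid_system \<xi> \<xi>' j)"
  let ?Pj = "\<lambda>j. massey_prefix p (omit j q) (hybrid_system \<xi> \<xi>' j) n"
  let ?\<eta> = "\<lambda>j. \<xi>' j - \<xi> j"
  have IH: "?M' - ?M = (\<Sum>j=1..n. psign (telescope_sign p q j) (?\<eta> j * ?Mj (n - 1) j))"
    using Suc by auto
  have PD: "?P' - ?P = (\<Sum>j=1..n. psign (telescope_sign p q j) (?\<eta> j * ?Pj j))"
    using Suc.prems by (intro massey_prefix_diff) auto
  have M'G: "?M' \<in> G (?E - p + 1)" using Suc.prems by (intro massey_rep_in_G) auto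
  have \<eta>G: "?x' - ?x \<in> G ?e" using Suc.prems by (intro G_diff) auto
  have "massey_rep p q b (Suc n) \<xi>' - massey_rep p q b (Suc n) \<xi>
      = ((?M' - ?M) * ?x + (?P' - ?P) * ?b) + ?M' * (?x' - ?x)"
    unfolding massey_rep_Suc by (simp add: algebra_simps)
  also have "(?M' - ?M) * ?x + (?P' - ?P) * ?b
      = (\<Sum>j=1..n. psign (telescope_sign p q j) (?\<eta> j * ?Mj n j))"
    unfolding IH PD sum_distrib_right sum.distrib[symmetric]
    by (rule sum.cong[OF refl])
      (simp add: massey_rep_hybrid_Suc psign_mult_left mult.assoc psign_distrib_add distrib_left)
  also have "?M' * (?x' - ?x) = psign (telescope_sign p q (Suc n)) (?\<eta> (Suc n) * ?Mj n (Suc n))"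
  proof -
    have "?M' * (?x' - ?x) = psign ((?E - p + 1) * ?e) ((?x' - ?x) * ?M')"
      using graded_commute[OF M'G \<eta>G] .
    also have "\<dots> = psign (telescope_sign p q (Suc n)) ((?x' - ?x) * ?M')"
    proof (rule psign_cong)
      have "(?E - p + 1) * ?e = telescope_sign p q (Suc n) - p * ?e"
        by (simp add: telescope_sign_def algebra_simps)
      then show "even ((?E - p + 1) * ?e) = even (telescope_sign p q (Suc n))"
        using even_p by simp
    qed
    finally show ?thesis by (simp add: massey_rep_hybrid_last)
  qed
  finally show ?case by simp
qed

lemma amassey_indet_elem:
  assumes "X \<in> indet (amassey G d p q a b n)" and "homogeneous_cocycles G d q b n"
  obtains \<zeta> w where "X = cls d (\<Sum>j=1..n. massey_rep p (omit j q) (omit j b) (n - 1) (\<zeta> j) * w j)"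
    and "\<And>j. defining_system G d p (omit j q) a (omit j b) (n - 1) (\<zeta> j)"
    and "\<And>j. j \<in> {1..n} \<Longrightarrow> d (w j) = 0"
proof -
  obtain \<xi> \<xi>' where X: "X = cls d (massey_rep p q b n \<xi>' - massey_rep p q b n \<xi>)"
    and \<xi>: "defining_system G d p q a b n \<xi>" and \<xi>': "defining_system G d p q a b n \<xi>'"
    using assms(1) unfolding indet_def amassey_eq by (auto simp: hdiff_cls)
  let ?\<zeta> = "hybrid_system \<xi> \<xi>'"
  let ?m = "\<lambda>j. massey_rep p (omit j q) (omit j b) (n - 1) (?\<zeta> j)"
  let ?\<eta> = "\<lambda>j. \<xi>' j - \<xi> j"
  define w where "w j = psign (telescope_sign p q j
    + (p + q j - 1) * (massey_deg p (omit j q) (n - 1) - p + 1)) (?\<eta> j)" for j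
  have \<zeta>: "defining_system G d p (omit j q) a (omit j b) (n - 1) (?\<zeta> j)" for j
    using \<xi> \<xi>' by (rule defining_system_hybrid)
  have factor: "psign (telescope_sign p q j) (?\<eta> j * ?m j) = ?m j * w j" if j: "j \<in> {1..n}" for j
  proof -
    have "?\<eta> j \<in> G (p + q j - 1)"
      using \<xi> \<xi>' j unfolding defining_system_def by (intro G_diff) auto
    moreover have "?m j \<in> G (massey_deg p (omit j q) (n - 1) - p + 1)"
      using massey_rep_cocycle(1)[OF \<zeta> homogeneous_cocycles_omit[OF assms(2)]] .
    ultimately show ?thesis
      by (simp add: graded_commute[of "?\<eta> j"] w_def psign_add psign_mult_right)
  qed
  have "massey_rep p q b n \<xi>' - massey_rep p q b n \<xi>
      = (\<Sum>j=1..n. psign (telescope_sign p q j) (?\<eta> j * ?m j))"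
    using \<xi> \<xi>' assms(2) unfolding defining_system_def homogeneous_cocycles_def
    by (intro massey_rep_diff) auto
  also have "\<dots> = (\<Sum>j=1..n. ?m j * w j)"
    using factor by (rule sum.cong[OF refl])
  finally have "X = cls d (\<Sum>j=1..n. ?m j * w j)"
    unfolding X by (rule arg_cong)
  moreover have "d (w j) = 0" if "j \<in> {1..n}" for j
    using \<xi> \<xi>' that by (simp add: defining_system_def w_def d_psign d_diff)
  ultimately show thesis using that \<zeta> by blast
qed

lemma tmassey_memI:
  assumes "y1 \<in> G (p + k1 - 1)" "d y1 = a * x1" "y3 \<in> G (p + k3 - 1)" "d y3 = a * x3" "x1 \<in> G k1"
  shows "cls d (x1 * y3 + psign (p + k1 - 1) y1 * x3) \<in> tmassey G d k1 p k3 x1 a x3"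
proof -
  have "x1 * y3 + psign (p + k1 - 1) y1 * x3 = x1 * y3 + psign (k1 + 1) (y1 * x3)"
    by (simp add: psign_mult_left psign_cong even_p)
  moreover have "y1 \<in> G (k1 + p - 1)" using assms by (simp add: add.commute)
  moreover have "d y1 = x1 * a" using assms a_commute by auto
  ultimately show ?thesis unfolding tmassey_def using assms(3,4)
    by (intro CollectI exI[of _ y1] exI[of _ y3]) auto
qed

lemma triple_rep_swap:
  assumes "x1 \<in> G k1" "x3 \<in> G k3" "y1 \<in> G (p + k1 - 1)" "y3 \<in> G (p + k3 - 1)"
  shows "x1 * y3 + psign (p + k1 - 1) y1 * x3
       = psign ((p + k1 - 1) * (1 + k3)) (x3 * y1 + psign (p + k3 - 1) y3 * x1)"
proof -
  have c1: "x3 * y1 = psign (k3 * (p + k1 - 1)) (y1 * x3)"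
    using graded_commute[OF assms(2,3)] .
  have c2: "y3 * x1 = psign ((p + k3 - 1) * k1) (x1 * y3)"
    using graded_commute[OF assms(4,1)] .
  have s1: "psign ((p + k1 - 1) * (1 + k3)) (psign (k3 * (p + k1 - 1)) z) = psign (p + k1 - 1) z"
    for z :: 'a
    unfolding psign_add[symmetric] by (rule psign_cong) (auto simp: even_p)
  have s2: "psign ((p + k1 - 1) * (1 + k3)) (psign (p + k3 - 1) (psign ((p + k3 - 1) * k1) z)) = z"
    for z :: 'a
  proof -
    have "psign ((p + k1 - 1) * (1 + k3)) (psign (p + k3 - 1) (psign ((p + k3 - 1) * k1) z))
        = psign ((p + k1 - 1) * (1 + k3) + ((p + k3 - 1) + (p + k3 - 1) * k1)) z"
      by (simp add: psign_add)
    also have "\<dots> = z" using even_p by (intro psign_even) auto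
    finally show ?thesis .
  qed
  show ?thesis
    unfolding c1 c2 psign_mult_left psign_distrib_add s1 s2 by (rule add.commute)
qed

lemma amassey2_rep_in_tmassey:
  assumes "defining_system G d p q a b 2 \<zeta>" and "b 1 \<in> G (q 1)"
  shows "cls d (massey_rep p q b 2 \<zeta>) \<in> tmassey G d (q 1) p (q 2) (b 1) a (b 2)"
  using assms unfolding massey_rep_2 defining_system_def by (intro tmassey_memI) auto

lemma amassey2_rep_in_tmassey_swapped:
  assumes "defining_system G d p q a b 2 \<zeta>" and "b 1 \<in> G (q 1)" and "b 2 \<in> G (q 2)"
  shows "cls d (psign ((p + q 1 - 1) * (1 + q 2)) (massey_rep p q b 2 \<zeta>))
    \<in> tmassey G d (q 2) p (q 1) (b 2) a (b 1)"
proof -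
  have "\<zeta> 1 \<in> G (p + q 1 - 1)" "d (\<zeta> 1) = a * b 1" "\<zeta> 2 \<in> G (p + q 2 - 1)" "d (\<zeta> 2) = a * b 2"
    using assms(1) unfolding defining_system_def by auto
  then show ?thesis
    unfolding massey_rep_2 triple_rep_swap[OF assms(2,3) \<open>\<zeta> 1 \<in> _\<close> \<open>\<zeta> 2 \<in> _\<close>] psign_psign_self
    using assms(3) by (intro tmassey_memI) auto
qed

lemma amassey_indet_subset:
  assumes "homogeneous_cocycles G d q b n"
  shows "indet (amassey G d p q a b n)
    \<subseteq> ssum d (\<lambda>j. smul d (amassey G d p (omit j q) a (omit j b) (n - 1)) (Hset d)) n"
proof
  fix X assume "X \<in> indet (amassey G d p q a b n)"
  then obtain \<zeta> w where X: "X = cls d (\<Sum>j=1..n. massey_rep p (omit j q) (omit j b) (n - 1) (\<zeta> j) * w j)"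
    and \<zeta>: "\<And>j. defining_system G d p (omit j q) a (omit j b) (n - 1) (\<zeta> j)"
    and w: "\<And>j. j \<in> {1..n} \<Longrightarrow> d (w j) = 0"
    using assms by (auto elim!: amassey_indet_elem)
  note rep = massey_rep_cocycle[OF \<zeta> homogeneous_cocycles_omit[OF assms]]
  show "X \<in> ssum d (\<lambda>j. smul d (amassey G d p (omit j q) a (omit j b) (n - 1)) (Hset d)) n"
    unfolding X
  proof (rule cls_sum_in_ssum)
    fix j assume "j \<in> {1..n}"
    moreover have "cls d (massey_rep p (omit j q) (omit j b) (n - 1) (\<zeta> j))
        \<in> amassey G d p (omit j q) a (omit j b) (n - 1)"
      unfolding amassey_eq using \<zeta> by blast
    ultimately show "cls d (massey_rep p (omit j q) (omit j b) (n - 1) (\<zeta> j) * w j)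
        \<in> smul d (amassey G d p (omit j q) a (omit j b) (n - 1)) (Hset d)"
      using rep w by (intro cls_mult_in_smul) auto
  qed
qed

text \<open>The summand for \<open>j = 2\<close> is \<open>[m\<^sub>2] \<and> [w\<^sub>2]\<close> with \<open>[m\<^sub>2] \<in> \<langle>a; b\<^sub>1, b\<^sub>3\<rangle>\<close>, and only
  \<open>\<plusminus>m\<^sub>2\<close> represents \<open>\<langle>b\<^sub>3, a, b\<^sub>1\<rangle>\<close>; the sign is moved onto \<open>w\<^sub>2\<close>.\<close>

lemma amassey3_indet_subset:
  assumes "homogeneous_cocycles G d q b 3"
  shows "indet (amassey G d p q a b 3)
    \<subseteq> sadd (sadd (smul d (tmassey G d (q 1) p (q 2) (b 1) a (b 2)) (Hset d))
                 (smul d (tmassey G d (q 2) p (q 3) (b 2) a (b 3)) (Hset d)))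
           (smul d (tmassey G d (q 3) p (q 1) (b 3) a (b 1)) (Hset d))"
proof
  fix X assume "X \<in> indet (amassey G d p q a b 3)"
  then obtain \<zeta> w where X: "X = cls d (\<Sum>j=1..3. massey_rep p (omit j q) (omit j b) (3 - 1) (\<zeta> j) * w j)"
    and \<zeta>: "\<And>j. defining_system G d p (omit j q) a (omit j b) 2 (\<zeta> j)"
    and w: "\<And>j. j \<in> {1..3} \<Longrightarrow> d (w j) = 0"
    using assms by (auto elim!: amassey_indet_elem)
  define m where "m j = massey_rep p (omit j q) (omit j b) 2 (\<zeta> j)" for j
  define \<epsilon> where "\<epsilon> = (p + q 1 - 1) * (1 + q 3)"
  have b: "b 1 \<in> G (q 1)" "b 2 \<in> G (q 2)" "b 3 \<in> G (q 3)"
    using assms unfolding homogeneous_cocycles_def by auto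
  have "homogeneous_cocycles G d (omit j q) (omit j b) 2" for j
    using homogeneous_cocycles_omit[OF assms] by simp
  then have m: "m j \<in> G (massey_deg p (omit j q) 2 - p + 1)" "d (m j) = 0" for j
    using massey_rep_cocycle[OF \<zeta>] by (simp_all add: m_def)
  have "cls d (m 3) \<in> tmassey G d (q 1) p (q 2) (b 1) a (b 2)"
    using amassey2_rep_in_tmassey[OF \<zeta>[of 3]] b by (simp add: m_def omit_def)
  then have T1: "cls d (m 3 * w 3) \<in> smul d (tmassey G d (q 1) p (q 2) (b 1) a (b 2)) (Hset d)"
    using m w by (intro cls_mult_in_smul) auto
  have "cls d (m 1) \<in> tmassey G d (q 2) p (q 3) (b 2) a (b 3)"
    using amassey2_rep_in_tmassey[OF \<zeta>[of 1]] b by (simp add: m_def omit_def eval_nat_numeral)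
  then have T2: "cls d (m 1 * w 1) \<in> smul d (tmassey G d (q 2) p (q 3) (b 2) a (b 3)) (Hset d)"
    using m w by (intro cls_mult_in_smul) auto
  have "cls d (psign \<epsilon> (m 2)) \<in> tmassey G d (q 3) p (q 1) (b 3) a (b 1)"
    using amassey2_rep_in_tmassey_swapped[OF \<zeta>[of 2]] b by (simp add: m_def omit_def \<epsilon>_def)
  then have T3: "cls d (psign \<epsilon> (m 2) * psign \<epsilon> (w 2))
      \<in> smul d (tmassey G d (q 3) p (q 1) (b 3) a (b 1)) (Hset d)"
    using m w by (intro cls_mult_in_smul G_psign) (auto simp: d_psign)
  have "X = cls d (m 3 * w 3 + m 1 * w 1 + psign \<epsilon> (m 2) * psign \<epsilon> (w 2))"
    unfolding X sum_atLeastAtMost_1_3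
    by (simp add: m_def psign_mult_left psign_mult_right ac_simps)
  then show "X \<in> sadd (sadd (smul d (tmassey G d (q 1) p (q 2) (b 1) a (b 2)) (Hset d))
                 (smul d (tmassey G d (q 2) p (q 3) (b 2) a (b 3)) (Hset d)))
           (smul d (tmassey G d (q 3) p (q 1) (b 3) a (b 1)) (Hset d))"
    unfolding sadd_def hadd_cls[symmetric] using T1 T2 T3 by blast
qed

end

text \<open>The exactness of the \<open>a b\<^sub>i\<close> only makes the Massey products nonempty.\<close>

theorem proposition2p7:
  fixes G :: "int \<Rightarrow> 'a::real_algebra_1 set" and d :: "'a \<Rightarrow> 'a"
    and a :: 'a and b :: "nat \<Rightarrow> 'a" and p :: int and q :: "nat \<Rightarrow> int" and n :: nat
  assumes "is_DGA G d"
    and "a \<in> G p" and "even p" and "d a = 0"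
    and "\<forall>i\<in>{1..n}. b i \<in> G (q i) \<and> d (b i) = 0 \<and> a * b i \<in> range d"
  shows "indet (amassey G d p q a b n)
           \<subseteq> ssum d (\<lambda>j. smul d (amassey G d p (omit j q) a (omit j b) (n - 1)) (Hset d)) n
       \<and> (n = 3 \<longrightarrow>
           indet (amassey G d p q a b 3)
           \<subseteq> sadd (sadd (smul d (tmassey G d (q 1) p (q 2) (b 1) a (b 2)) (Hset d))
                        (smul d (tmassey G d (q 2) p (q 3) (b 2) a (b 3)) (Hset d)))
                  (smul d (tmassey G d (q 3) p (q 1) (b 3) a (b 1)) (Hset d)))"
proof -
  interpret dga_even_element G d p a
    using assms(1-3) by unfold_locales
  have "homogeneous_cocycles G d q b n"
    using assms(5) unfolding homogeneous_cocycles_def by blast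
  then show ?thesis
    using amassey_indet_subset amassey3_indet_subset by blast
qed

end
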